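(* The assignment $\epsilon_\Gamma$ described in the context is a well-defined functor $\mathcal{G}(E_{\Gamma_S})\to\mathcal{G}(\Gamma_S)$: it is independent of the E-path representing an E-chain, $\epsilon_\Gamma(\mathfrak c)$ is a morphism of $\mathcal G(\Gamma_S)$ from $\mathfrak e_0$ to $\mathfrak e_n$ for $\mathfrak c=(\mathfrak e_0,\dots,\mathfrak e_n)$, it preserves composition, and it is the identity on objects (so its object map is an order isomorphism). Moreover it commutes with restriction: for every E-chain $\mathfrak c$ with domain $\mathfrak e_0$ and every $h\in E$ with $h\,\omega\, e_0$, $\epsilon_\Gamma(\mathfrak h{\downharpoonleft}\mathfrak c)=\mathfrak h{\downharpoonleft}\epsilon_\Gamma(\mathfrak c)$, where $\mathfrak h=(Sh,hS)$ and the right-hand restriction is $(\rho_{hw},\lambda_{w'h})$ if $\epsilon_\Gamma(\mathfrak c)=(\rho_w,\lambda_{w'})$.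
   Context: Let $S$ be a regular semigroup and $E=E(S)$ its set of idempotents. On $E$: $e\,\omega^l f\iff ef=e$, $e\,\omega^r f\iff fe=e$, $\omega=\omega^l\cap\omega^r$; $\mathscr R,\mathscr L$ are Green's relations; $V(x)$ is the set of inverses of $x$. For $e,f\in E$ and $u\in eSf$ let $\rho(e,u,f)\colon Se\to Sf$, $t\mapsto tu$; for $w\in fSe$ let $\lambda(e,w,f)\colon eS\to fS$, $t\mapsto wt$. The groupoid $\mathcal{G}(\Gamma_S)$ has objects $\mathfrak e:=(Se,eS)$, $e\in E$, and morphisms from $(Se,eS)$ to $(Sf,fS)$ the pairs $(\rho_x,\lambda_{x'}):=(\rho(e,x,f),\lambda(e,x',f))$ with $x'\in V(x)$, $xx'=e$, $x'x=f$; composition $(\rho_x,\lambda_{x'})\ast(\rho_y,\lambda_{y'})=(\rho_{xy},\lambda_{y'x'})$; the restriction of $(\rho_x,\lambda_{x'})\colon\mathfrak e\to\mathfrak f$ to $\mathfrak g$ for $g\,\omega\,e$ is $(\rho_{gx},\lambda_{x'g})$. Let $E_{\Gamma_S}=\{(Se,eS):e\in E\}$, given the biordered-set structure transported from $E$ via $e\mapsto\mathfrak e$ (so $\mathfrak e\,\omega^l\,\mathfrak f$ iff $Se\subseteq Sf$, $\mathfrak e\,\omega^r\,\mathfrak f$ iff $eS\subseteq fS$, basic products $\mathfrak e\mathfrak f=(Sef,efS)$ when defined). An E-path is a finite sequence $(e_0,\dots,e_n)$ in $E$ with $e_{i-1}(\mathscr R\cup\mathscr L)e_i$ for all $i$;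 a vertex $e_i$ ($0<i<n$) is inessential if $e_{i-1}\mathscr R e_i\mathscr R e_{i+1}$ or $e_{i-1}\mathscr L e_i\mathscr L e_{i+1}$. E-chains are the classes of E-paths under the equivalence generated by inserting/deleting inessential vertices. $\mathcal G(E_{\Gamma_S})$ is the groupoid with objects $E_{\Gamma_S}$ and morphisms the E-chains $(\mathfrak e_0,\dots,\mathfrak e_n)$ from $\mathfrak e_0$ to $\mathfrak e_n$, with concatenation as composition. For an E-chain $\mathfrak c=(\mathfrak e_0,\dots,\mathfrak e_n)$ and $h\,\omega\, e_0$, $\mathfrak h{\downharpoonleft}\mathfrak c=\mathfrak h\cdot\mathfrak c:=(\mathfrak h,\mathfrak h_0,\mathfrak h_1,\dots,\mathfrak h_n)$ with $h_0=he_0$ and $h_i=e_ih_{i-1}e_i$. Define $\epsilon_\Gamma$ by $\epsilon_\Gamma(\mathfrak e)=\mathfrak e$ on objects and $\epsilon_\Gamma(\mathfrak e_0,\dots,\mathfrak e_n)=(\rho_w,\lambda_{w'})$ where $w=e_0e_1\cdots e_n$ and $w'=e_ne_{n-1}\cdots e_0$. *)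

theory Defs
  imports Main
begin

definition regular_semigroup :: "'a::semigroup_mult itself \<Rightarrow> bool" where
  "regular_semigroup _ \<longleftrightarrow> (\<forall>x::'a. \<exists>y. x * y * x = x)"

definition idem :: "'a::semigroup_mult \<Rightarrow> bool" where
  "idem e \<longleftrightarrow> e * e = e"

definition inverse_of :: "'a::semigroup_mult \<Rightarrow> 'a \<Rightarrow> bool" where
  "inverse_of x' x \<longleftrightarrow> x * x' * x = x \<and> x' * x * x' = x'"

definition lideal1 :: "'a::semigroup_mult \<Rightarrow> 'a set" where
  "lideal1 x = insert x {s * x | s. True}"
definition rideal1 :: "'a::semigroup_mult \<Rightarrow> 'a set" where
  "rideal1 x = insert x {x * s | s. True}"

definition greenR :: "'a::semigroup_mult \<Rightarrow> 'a \<Rightarrow> bool" where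
  "greenR x y \<longleftrightarrow> rideal1 x = rideal1 y"
definition greenL :: "'a::semigroup_mult \<Rightarrow> 'a \<Rightarrow> bool" where
  "greenL x y \<longleftrightarrow> lideal1 x = lideal1 y"

definition omega :: "'a::semigroup_mult \<Rightarrow> 'a \<Rightarrow> bool" where
  "omega e f \<longleftrightarrow> e * f = e \<and> f * e = e"

definition Sl :: "'a::semigroup_mult \<Rightarrow> 'a set" where
  "Sl e = {s * e | s. True}"
definition Sr :: "'a::semigroup_mult \<Rightarrow> 'a set" where
  "Sr e = {e * s | s. True}"

definition obj :: "'a::semigroup_mult \<Rightarrow> 'a set \<times> 'a set" where
  "obj e = (Sl e, Sr e)"

text \<open>A map is represented by (domain, codomain, function restricted to domain).\<close>
type_synonym 'a smap = "'a set \<times> 'a set \<times> ('a \<Rightarrow> 'a)"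

definition rho :: "'a::semigroup_mult \<Rightarrow> 'a \<Rightarrow> 'a \<Rightarrow> 'a smap" where
  "rho e u f = (Sl e, Sl f, (\<lambda>t. if t \<in> Sl e then t * u else undefined))"
definition lam :: "'a::semigroup_mult \<Rightarrow> 'a \<Rightarrow> 'a \<Rightarrow> 'a smap" where
  "lam e w f = (Sr e, Sr f, (\<lambda>t. if t \<in> Sr e then w * t else undefined))"

type_synonym 'a gmor = "'a smap \<times> 'a smap"

text \<open>(rho_x, lambda_x') as a morphism from (Se,eS) to (Sf,fS).\<close>
definition gmor :: "'a::semigroup_mult \<Rightarrow> 'a \<Rightarrow> 'a \<Rightarrow> 'a \<Rightarrow> 'a gmor" where
  "gmor e x x' f = (rho e x f, lam e x' f)"

definition GMor :: "'a::semigroup_mult \<Rightarrow> 'a \<Rightarrow> 'a gmor set" where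
  "GMor e f = {gmor e x x' f | x x'. inverse_of x' x \<and> x * x' = e \<and> x' * x = f}"

definition epath :: "'a::semigroup_mult list \<Rightarrow> bool" where
  "epath p \<longleftrightarrow> p \<noteq> [] \<and> (\<forall>x\<in>set p. idem x) \<and>
     (\<forall>i. Suc i < length p \<longrightarrow> greenR (p ! i) (p ! Suc i) \<or> greenL (p ! i) (p ! Suc i))"

definition del_inessential :: "'a::semigroup_mult list \<Rightarrow> 'a list \<Rightarrow> bool" where
  "del_inessential p q \<longleftrightarrow> epath p \<and>
     (\<exists>as x y z bs. p = as @ [x, y, z] @ bs \<and> q = as @ [x, z] @ bs \<and>
        ((greenR x y \<and> greenR y z) \<or> (greenL x y \<and> greenL y z)))"

definition echain_equiv :: "'a::semigroup_mult list \<Rightarrow> 'a list \<Rightarrow> bool" where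
  "echain_equiv = (\<lambda>p q. del_inessential p q \<or> del_inessential q p)\<^sup>*\<^sup>*"

fun lprod :: "'a::semigroup_mult list \<Rightarrow> 'a" where
  "lprod [] = undefined"
| "lprod [x] = x"
| "lprod (x # y # xs) = x * lprod (y # xs)"

definition eps :: "'a::semigroup_mult list \<Rightarrow> 'a gmor" where
  "eps p = gmor (hd p) (lprod p) (lprod (rev p)) (last p)"

text \<open>Restriction h|c = (h, h_0, ..., h_n), h_0 = h e_0, h_i = e_i h_{i-1} e_i.\<close>
fun rseq :: "'a::semigroup_mult \<Rightarrow> 'a list \<Rightarrow> 'a list" where
  "rseq h [] = []"
| "rseq h (e # es) = (let h' = e * h * e in h' # rseq h' es)"

fun restr :: "'a::semigroup_mult \<Rightarrow> 'a list \<Rightarrow> 'a list" where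
  "restr h [] = []"
| "restr h (e0 # es) = h # (h * e0) # rseq (h * e0) es"

end

theory Submission
  imports Defs
begin

text \<open>
  Consecutive vertices e, f of an E-path are R- or L-related idempotents, so e f e = e.
  Hence the products w = e_0 ... e_n and w' = e_n ... e_0 satisfy w w' = e_0 and w' w = e_n,
  which makes them mutually inverse. An inessential vertex y between x and z satisfies
  x y z = x z, so w and w' depend only on the E-chain, and gluing two paths at a common vertex
  multiplies their products because w e_n = w. For the restriction, the vertices
  h_i = e_i h_(i-1) e_i stay below e_i, consecutive ones are related exactly as e_(i-1), e_i are,
  and the products along the restricted path are h w and w' h. Finally, gmor e x x' f
  determines e x and x' e, so the representatives x, x' of a morphism equal to eps p are w
  and w' themselves.
\<close>

lemma rideal1_subset_iff: "rideal1 x \<subseteq> rideal1 y \<longleftrightarrow> x \<in> rideal1 y"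
  unfolding rideal1_def by (auto simp: mult.assoc)

lemma lideal1_subset_iff: "lideal1 x \<subseteq> lideal1 y \<longleftrightarrow> x \<in> lideal1 y"
  unfolding lideal1_def by (auto simp: mult.assoc[symmetric])

lemma mem_rideal1_idem_iff: "idem x \<Longrightarrow> y \<in> rideal1 x \<longleftrightarrow> x * y = y"
  unfolding rideal1_def idem_def by (auto simp: mult.assoc[symmetric]) metis

lemma mem_lideal1_idem_iff: "idem x \<Longrightarrow> y \<in> lideal1 x \<longleftrightarrow> y * x = y"
  unfolding lideal1_def idem_def by (auto simp: mult.assoc) metis

lemma greenR_idem_iff: "idem x \<Longrightarrow> idem y \<Longrightarrow> greenR x y \<longleftrightarrow> x * y = y \<and> y * x = x"
  unfolding greenR_def by (auto simp: set_eq_subset rideal1_subset_iff mem_rideal1_idem_iff)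

lemma greenL_idem_iff: "idem x \<Longrightarrow> idem y \<Longrightarrow> greenL x y \<longleftrightarrow> x * y = x \<and> y * x = y"
  unfolding greenL_def by (auto simp: set_eq_subset lideal1_subset_iff mem_lideal1_idem_iff)

definition greenRL :: "'a::semigroup_mult \<Rightarrow> 'a \<Rightarrow> bool" where
  "greenRL x y \<longleftrightarrow> greenR x y \<or> greenL x y"

lemma greenRL_commute: "greenRL x y \<longleftrightarrow> greenRL y x"
  unfolding greenRL_def greenR_def greenL_def by auto

lemma greenRL_sandwich:
  assumes "idem e" "idem f" "greenRL e f"
  shows "e * f * e = e"
  using assms(3) unfolding greenRL_def
proof
  assume "greenR e f"
  then show ?thesis using assms(1,2) by (simp add: greenR_idem_iff)
next
  assume "greenL e f"
  then show ?thesis using assms(1,2) by (simp add: greenL_idem_iff idem_def)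
qed

lemma inessential_vertex_cancel:
  assumes "idem x" "idem y" "idem z" "(greenR x y \<and> greenR y z) \<or> (greenL x y \<and> greenL y z)"
  shows "x * y * z = x * z"
  using assms(4)
proof
  assume "greenR x y \<and> greenR y z"
  then have "y * z = z" using assms(2,3) by (simp add: greenR_idem_iff)
  then show ?thesis by (simp add: mult.assoc)
next
  assume "greenL x y \<and> greenL y z"
  then have "x * y = x" using assms(1,2) by (simp add: greenL_idem_iff)
  then show ?thesis by simp
qed

lemma omega_conjugate_greenRL:
  assumes g: "idem g" "omega g e" and ef: "idem e" "idem f" "greenRL e f"
  defines "g' \<equiv> f * g * f"
  shows "idem g'" "omega g' f" "greenRL g g'" "g * g' = g * f" "g' * g = f * g"
proof -
  have ge: "g * e = g" "e * g = g" using g(2) by (auto simp: omega_def)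
  have ff: "f * f = f" and gg: "g * g = g" using ef(2) g(1) by (auto simp: idem_def)
  have gfg: "g * f * g = g"
  proof -
    have "g * f * g = (g * e) * f * (e * g)" using ge by simp
    also have "\<dots> = g * (e * f * e) * g" by (simp add: mult.assoc)
    also have "\<dots> = g" using greenRL_sandwich[OF ef] ge gg by (simp add: mult.assoc)
    finally show ?thesis .
  qed
  show gg': "g * g' = g * f" using gfg unfolding g'_def by (simp add: mult.assoc[symmetric])
  show g'g: "g' * g = f * g" using gfg unfolding g'_def by (simp add: mult.assoc)
  have g'f: "g' * f = g'" "f * g' = g'"
    using ff unfolding g'_def by (simp_all add: mult.assoc flip: mult.assoc[of f f])
  then show "omega g' f" unfolding omega_def by simp
  have "g' * g' = (g' * f) * g * f" unfolding g'_def by (simp add: mult.assoc)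
  also have "\<dots> = g'" using g'f g'g unfolding g'_def by (simp add: mult.assoc)
  finally show "idem g'" unfolding idem_def .
  show "greenRL g g'"
    unfolding greenRL_def using ef(3)[unfolded greenRL_def]
  proof
    assume "greenR e f"
    then have "f * e = e" using ef(1,2) by (simp add: greenR_idem_iff)
    then have "f * g = g" using ge by (metis mult.assoc)
    then have "g' = g * f" unfolding g'_def by simp
    then have "greenR g g'"
      using greenR_idem_iff[OF g(1) \<open>idem g'\<close>] gg' g'g \<open>f * g = g\<close> by simp
    then show "greenR g g' \<or> greenL g g'" ..
  next
    assume "greenL e f"
    then have "e * f = e" using ef(1,2) by (simp add: greenL_idem_iff)
    then have "g * f = g" using ge by (metis mult.assoc)
    then have "g' = f * g" unfolding g'_def by (simp add: mult.assoc)
    then have "greenL g g'"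
      using greenL_idem_iff[OF g(1) \<open>idem g'\<close>] gg' g'g \<open>g * f = g\<close> by simp
    then show "greenR g g' \<or> greenL g g'" ..
  qed
qed

lemma lprod_Cons: "xs \<noteq> [] \<Longrightarrow> lprod (x # xs) = x * lprod xs"
  by (cases xs) auto

lemma lprod_append: "xs \<noteq> [] \<Longrightarrow> ys \<noteq> [] \<Longrightarrow> lprod (xs @ ys) = lprod xs * lprod ys"
  by (induction xs rule: lprod.induct) (auto simp: lprod_Cons mult.assoc)

lemma lprod_rev_Cons: "xs \<noteq> [] \<Longrightarrow> lprod (rev (x # xs)) = lprod (rev xs) * x"
  by (simp add: lprod_append)

lemma hd_mult_lprod: "p \<noteq> [] \<Longrightarrow> idem (hd p) \<Longrightarrow> hd p * lprod p = lprod p"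
  by (cases p rule: lprod.cases) (auto simp: idem_def mult.assoc[symmetric])

lemma lprod_mult_last: "p \<noteq> [] \<Longrightarrow> idem (last p) \<Longrightarrow> lprod p * last p = lprod p"
  by (induction p rule: lprod.induct) (auto simp: idem_def mult.assoc)

lemma epath_iff: "epath p \<longleftrightarrow> p \<noteq> [] \<and> (\<forall>x\<in>set p. idem x) \<and> successively greenRL p"
  unfolding epath_def successively_conv_nth greenRL_def ..

lemma epath_Cons_iff:
  "epath (x # xs) \<longleftrightarrow> idem x \<and> (xs = [] \<or> greenRL x (hd xs) \<and> epath xs)"
  by (auto simp: epath_iff successively_Cons)

lemma lprod_mult_lprod_rev:
  "epath p \<Longrightarrow> lprod p * lprod (rev p) = hd p \<and> lprod (rev p) * lprod p = last p"
proof (induction p)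
  case (Cons e es)
  show ?case
  proof (cases es)
    case Nil
    then show ?thesis using Cons.prems by (simp add: epath_Cons_iff idem_def)
  next
    case (Cons f fs)
    define w w' where "w = lprod es" and "w' = lprod (rev es)"
    have e: "idem e" "idem f" "greenRL e f" and es: "epath es"
      using \<open>epath (e # es)\<close> Cons by (auto simp: epath_Cons_iff)
    have ww': "w * w' = f" "w' * w = last es"
      using Cons.IH[OF es] Cons unfolding w_def w'_def by auto
    have fw: "f * w = w" "w' * f = w'"
      using hd_mult_lprod[of es] lprod_mult_last[of "rev es"] \<open>idem f\<close>
      unfolding w_def w'_def Cons by (auto simp: last_rev)
    have prods: "lprod (e # es) = e * w" "lprod (rev (e # es)) = w' * e"
      using lprod_Cons lprod_rev_Cons Cons unfolding w_def w'_def by blast+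
    have "lprod (e # es) * lprod (rev (e # es)) = e * (w * w') * e"
      using prods by (simp add: mult.assoc)
    also have "\<dots> = e" using ww' greenRL_sandwich[OF e] by simp
    finally have hd_eq: "lprod (e # es) * lprod (rev (e # es)) = e" .
    have "lprod (rev (e # es)) * lprod (e # es) = (w' * f) * (e * e) * (f * w)"
      using prods fw by (simp add: mult.assoc)
    also have "\<dots> = w' * (f * e * f) * w"
      using e(1) by (simp add: idem_def mult.assoc)
    also have "\<dots> = last es"
      using ww' fw greenRL_sandwich[OF e(2,1)] e(3) by (simp add: greenRL_commute)
    finally show ?thesis using hd_eq Cons by simp
  qed
qed (simp add: epath_iff)

lemma eps_in_GMor: "epath p \<Longrightarrow> eps p \<in> GMor (hd p) (last p)"
proof -
  assume p: "epath p"
  define w w' where "w = lprod p" and "w' = lprod (rev p)"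
  have "p \<noteq> []" "idem (hd p)" "idem (last p)" using p by (auto simp: epath_iff)
  then have "w * last p = w" "w' * hd p = w'"
    using lprod_mult_last[of p] lprod_mult_last[of "rev p"] unfolding w_def w'_def
    by (auto simp: last_rev)
  moreover have "w * w' = hd p" "w' * w = last p"
    using lprod_mult_lprod_rev[OF p] unfolding w_def w'_def by auto
  ultimately have "inverse_of w' w" unfolding inverse_of_def by (metis mult.assoc)
  with \<open>w * w' = hd p\<close> \<open>w' * w = last p\<close> show ?thesis
    unfolding eps_def GMor_def w_def w'_def by blast
qed

lemma gmor_eqD:
  assumes "gmor e x x' f = gmor e y y' f" "idem e"
  shows "e * x = e * y" "x' * e = y' * e"
proof -
  have "e \<in> Sl e" "e \<in> Sr e"
    using \<open>idem e\<close> unfolding Sl_def Sr_def idem_def by (auto intro: exI[of _ e])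
  moreover have "snd (snd (rho e x f)) e = snd (snd (rho e y f)) e"
    "snd (snd (lam e x' f)) e = snd (snd (lam e y' f)) e"
    using assms(1) unfolding gmor_def by auto
  ultimately show "e * x = e * y" "x' * e = y' * e" unfolding rho_def lam_def by auto
qed

lemma eps_eq_gmorD:
  assumes p: "epath p" and x: "inverse_of x' x" "x * x' = hd p"
    and eq: "eps p = gmor (hd p) x x' (last p)"
  shows "x = lprod p" "x' = lprod (rev p)"
proof -
  have ne: "p \<noteq> []" and e: "idem (hd p)" using p by (auto simp: epath_iff)
  have "hd p * x = x" "x' * hd p = x'"
    using x unfolding inverse_of_def by (metis mult.assoc)+
  moreover have "hd p * lprod p = lprod p" "lprod (rev p) * hd p = lprod (rev p)"
    using hd_mult_lprod[OF ne e] lprod_mult_last[of "rev p"] ne e by (auto simp: last_rev)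
  moreover have "hd p * lprod p = hd p * x" "lprod (rev p) * hd p = x' * hd p"
    using gmor_eqD[OF eq[unfolded eps_def] e] by auto
  ultimately show "x = lprod p" "x' = lprod (rev p)" by simp_all
qed

lemma lprod_contract:
  "x * y * z = x * z \<Longrightarrow> lprod (as @ [x, y, z] @ bs) = lprod (as @ [x, z] @ bs)"
proof (induction as)
  case Nil
  then show ?case by (cases bs) (auto simp flip: mult.assoc)
qed (simp add: lprod_Cons)

lemma eps_del_inessential: "del_inessential p q \<Longrightarrow> eps p = eps q"
proof -
  assume d: "del_inessential p q"
  then obtain as x y z bs where pq: "p = as @ [x, y, z] @ bs" "q = as @ [x, z] @ bs"
    and r: "(greenR x y \<and> greenR y z) \<or> (greenL x y \<and> greenL y z)"
    unfolding del_inessential_def by blast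
  have i: "idem x" "idem y" "idem z"
    using d pq unfolding del_inessential_def epath_def by auto
  have r': "(greenR z y \<and> greenR y x) \<or> (greenL z y \<and> greenL y x)"
    using r unfolding greenR_def greenL_def by auto
  have "lprod p = lprod q" "lprod (rev p) = lprod (rev q)"
    using lprod_contract[OF inessential_vertex_cancel[OF i r]]
      lprod_contract[OF inessential_vertex_cancel[OF i(3,2,1) r'], of "rev bs" "rev as"]
    unfolding pq by simp_all
  moreover have "hd p = hd q" "last p = last q" unfolding pq by (cases as; simp)+
  ultimately show ?thesis unfolding eps_def by simp
qed

lemma eps_echain_equiv: "echain_equiv p q \<Longrightarrow> eps p = eps q"
  unfolding echain_equiv_def
  by (induction rule: rtranclp_induct) (auto dest: eps_del_inessential)

lemma lprod_append_overlap:
  "idem a \<Longrightarrow> lprod (xs @ a # ys) = lprod (xs @ [a]) * lprod (a # ys)"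
proof (cases "ys = []")
  case True
  assume "idem a"
  then show ?thesis using True lprod_mult_last[of "xs @ [a]"] by simp
next
  case False
  assume "idem a"
  then have "lprod (xs @ [a]) * lprod (a # ys) = lprod (xs @ [a]) * a * lprod ys"
    using False by (simp add: lprod_Cons mult.assoc)
  also have "\<dots> = lprod (xs @ a # ys)"
    using \<open>idem a\<close> False lprod_mult_last[of "xs @ [a]"] lprod_append[of "xs @ [a]" ys] by simp
  finally show ?thesis ..
qed

lemma eps_append:
  assumes p: "epath p" and q: "epath q" and pq: "last p = hd q"
  shows "eps (p @ tl q) = gmor (hd p) (lprod p * lprod q) (lprod (rev q) * lprod (rev p)) (last q)"
proof -
  have "p \<noteq> []" "q \<noteq> []" using p q by (auto simp: epath_iff)
  then obtain xs a ys where p': "p = xs @ [a]" and q': "q = a # ys"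
    using pq by (metis append_butlast_last_id list.collapse)
  have a: "idem a" using p p' by (simp add: epath_iff)
  have "lprod (p @ tl q) = lprod p * lprod q"
    using lprod_append_overlap[OF a, of xs ys] unfolding p' q' by simp
  moreover have "lprod (rev (p @ tl q)) = lprod (rev q) * lprod (rev p)"
    using lprod_append_overlap[OF a, of "rev ys" "rev xs"] unfolding p' q' by simp
  moreover have "hd (p @ tl q) = hd p" "last (p @ tl q) = last q"
    unfolding p' q' by (cases xs; cases ys; simp)+
  ultimately show ?thesis unfolding eps_def by simp
qed

lemma epath_rseq:
  assumes "epath (e # es)" "idem g" "omega g e"
  shows "epath (g # rseq g es) \<and> lprod (g # rseq g es) = g * lprod (e # es) \<and>
    lprod (rev (g # rseq g es)) = lprod (rev (e # es)) * g"
  using assms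
proof (induction es arbitrary: e g)
  case Nil
  then show ?case by (simp add: epath_Cons_iff omega_def)
next
  case (Cons f fs)
  define g' where "g' = f * g * f"
  define w w' where "w = lprod (f # fs)" and "w' = lprod (rev (f # fs))"
  have ef: "idem e" "idem f" "greenRL e f" and p: "epath (f # fs)"
    using Cons.prems(1) by (auto simp: epath_Cons_iff)
  note g' = omega_conjugate_greenRL[OF Cons.prems(2,3) ef, folded g'_def]
  have IH: "epath (g' # rseq g' fs)" "lprod (g' # rseq g' fs) = g' * w"
    "lprod (rev (g' # rseq g' fs)) = w' * g'"
    using Cons.IH[OF p g'(1,2)] unfolding w_def w'_def by auto
  have step: "rseq g (f # fs) = g' # rseq g' fs" by (simp add: g'_def Let_def)
  have fw: "f * w = w" "w' * f = w'"
    using hd_mult_lprod[of "f # fs"] lprod_mult_last[of "rev (f # fs)"] \<open>idem f\<close>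
    unfolding w_def w'_def by auto
  have ge: "g * e = g" "e * g = g" using Cons.prems(3) by (auto simp: omega_def)
  have "epath (g # rseq g (f # fs))"
    using IH(1) g'(3) \<open>idem g\<close> unfolding step by (simp add: epath_Cons_iff)
  moreover have "lprod (g # rseq g (f # fs)) = g * lprod (e # f # fs)"
  proof -
    have "lprod (g # rseq g (f # fs)) = (g * g') * w" using IH(2) unfolding step by (simp add: mult.assoc)
    also have "\<dots> = (g * e) * w" using g'(4) fw ge by (metis mult.assoc)
    finally show ?thesis by (simp add: w_def mult.assoc)
  qed
  moreover have "lprod (rev (g # rseq g (f # fs))) = lprod (rev (e # f # fs)) * g"
  proof -
    have "lprod (rev (g # rseq g (f # fs))) = w' * (g' * g)"
      using IH(3) lprod_rev_Cons[of "g' # rseq g' fs" g] unfolding step by (simp add: mult.assoc)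
    also have "\<dots> = w' * (e * g)" using g'(5) fw ge by (metis mult.assoc)
    finally show ?thesis using lprod_rev_Cons[of "f # fs" e] by (simp add: w'_def mult.assoc)
  qed
  ultimately show ?case by blast
qed

lemma eps_restr:
  assumes p: "epath p" and h: "idem h" "omega h (hd p)"
  shows "epath (restr h p) \<and>
    eps (restr h p) = gmor h (h * lprod p) (lprod (rev p) * h) (lprod (rev p) * h * lprod p)"
proof -
  obtain e es where pe: "p = e # es" using p by (cases p) (auto simp: epath_iff)
  define L where "L = h # rseq h es"
  have hh: "h * h = h" "h * e = h" using h unfolding pe by (auto simp: idem_def omega_def)
  have restr: "restr h p = h # L" unfolding pe L_def using hh by simp
  have "omega h e" using h(2) unfolding pe by simp
  then have L: "epath L" "lprod L = h * lprod p" "lprod (rev L) = lprod (rev p) * h"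
    using epath_rseq[OF p[unfolded pe] h(1)] unfolding L_def pe by auto
  have "epath (h # L)"
    using L(1) h(1) unfolding L_def by (simp add: epath_Cons_iff greenRL_def greenR_def)
  moreover have "lprod (h # L) = h * lprod p"
    using L(2) hh(1) unfolding L_def by (simp add: mult.assoc[symmetric])
  moreover have "lprod (rev (h # L)) = lprod (rev p) * h"
    using L(3) hh(1) lprod_rev_Cons[of L h] unfolding L_def by (simp add: mult.assoc)
  moreover have "last (h # L) = lprod (rev p) * h * lprod p"
  proof -
    have "last (h # L) = lprod (rev L) * lprod L" using lprod_mult_lprod_rev[OF L(1)] L_def by simp
    then show ?thesis using L(2,3) hh(1) by (simp add: mult.assoc flip: mult.assoc[of h h])
  qed
  ultimately show ?thesis unfolding restr eps_def by simp
qed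

theorem mainTheorem4:
  fixes S :: "'a::semigroup_mult itself"
  assumes reg: "regular_semigroup S"
  shows
    \<comment> \<open>independence of the representing E-path\<close>
    "(\<forall>p q :: 'a list. epath p \<and> echain_equiv p q \<longrightarrow> eps p = eps q)
   \<and> \<comment> \<open>eps(c) is a morphism from e_0 to e_n\<close>
     (\<forall>p :: 'a list. epath p \<longrightarrow> eps p \<in> GMor (hd p) (last p))
   \<and> \<comment> \<open>identities (trivial chains) go to identities\<close>
     (\<forall>e :: 'a. idem e \<longrightarrow> eps [e] = gmor e e e e)
   \<and> \<comment> \<open>preserves composition\<close>
     (\<forall>(p :: 'a list) q x x' y y'. epath p \<and> epath q \<and> last p = hd q \<and>
        inverse_of x' x \<and> x * x' = hd p \<and> x' * x = last p \<and>
        inverse_of y' y \<and> y * y' = hd q \<and> y' * y = last q \<and>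
        eps p = gmor (hd p) x x' (last p) \<and> eps q = gmor (hd q) y y' (last q) \<longrightarrow>
        eps (p @ tl q) = gmor (hd p) (x * y) (y' * x') (last q))
   \<and> \<comment> \<open>commutes with restriction\<close>
     (\<forall>(p :: 'a list) h x x'. epath p \<and> idem h \<and> omega h (hd p) \<and>
        inverse_of x' x \<and> x * x' = hd p \<and> x' * x = last p \<and>
        eps p = gmor (hd p) x x' (last p) \<longrightarrow>
        epath (restr h p) \<and>
        eps (restr h p) = gmor h (h * x) (x' * h) (x' * h * x))"
proof (intro conjI allI impI)
  fix p q :: "'a list"
  assume "epath p \<and> echain_equiv p q"
  then show "eps p = eps q" using eps_echain_equiv by blast
next
  fix p :: "'a list"
  assume "epath p"
  then show "eps p \<in> GMor (hd p) (last p)" by (rule eps_in_GMor)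
next
  fix e :: 'a
  show "eps [e] = gmor e e e e" by (simp add: eps_def)
next
  fix p q :: "'a list" and x x' y y'
  assume "epath p \<and> epath q \<and> last p = hd q \<and>
    inverse_of x' x \<and> x * x' = hd p \<and> x' * x = last p \<and>
    inverse_of y' y \<and> y * y' = hd q \<and> y' * y = last q \<and>
    eps p = gmor (hd p) x x' (last p) \<and> eps q = gmor (hd q) y y' (last q)"
  then show "eps (p @ tl q) = gmor (hd p) (x * y) (y' * x') (last q)"
    using eps_append eps_eq_gmorD[of p x' x] eps_eq_gmorD[of q y' y] by metis
next
  fix p :: "'a list" and h x x'
  assume "epath p \<and> idem h \<and> omega h (hd p) \<and>
    inverse_of x' x \<and> x * x' = hd p \<and> x' * x = last p \<and>
    eps p = gmor (hd p) x x' (last p)"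
  then show "epath (restr h p)" and "eps (restr h p) = gmor h (h * x) (x' * h) (x' * h * x)"
    using eps_restr eps_eq_gmorD[of p x' x] by metis+
qed

end
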